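(* Every Bézout ring $R$ whose space of minimal prime ideals $\mathrm{MinSpec}(R)$ (with the Zariski topology) is compact is an Hermite ring.
   Context: All rings are commutative with identity. $R$ is Bézout if every finitely generated ideal is principal. $R$ is Hermite if for every $a,b\in R$ there exist $d,a',b'\in R$ with $a=da'$, $b=db'$ and $Ra'+Rb'=R$. *)

theory Defs
  imports "HOL-Analysis.Analysis"
begin

definition is_ideal :: "'a::comm_ring_1 set \<Rightarrow> bool" where
  "is_ideal I \<longleftrightarrow> 0 \<in> I \<and> (\<forall>x\<in>I. \<forall>y\<in>I. x + y \<in> I) \<and> (\<forall>r. \<forall>x\<in>I. r * x \<in> I)"

definition ideal_gen :: "'a::comm_ring_1 set \<Rightarrow> 'a set" where
  "ideal_gen S = \<Inter>{I. is_ideal I \<and> S \<subseteq> I}"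

definition finitely_generated_ideal :: "'a::comm_ring_1 set \<Rightarrow> bool" where
  "finitely_generated_ideal I \<longleftrightarrow> (\<exists>S. finite S \<and> I = ideal_gen S)"

definition principal_ideal :: "'a::comm_ring_1 set \<Rightarrow> bool" where
  "principal_ideal I \<longleftrightarrow> (\<exists>d. I = {r * d | r. True})"

definition bezout_ring :: "'a::comm_ring_1 itself \<Rightarrow> bool" where
  "bezout_ring _ \<longleftrightarrow> (\<forall>I::'a set. finitely_generated_ideal I \<longrightarrow> principal_ideal I)"

definition hermite_ring :: "'a::comm_ring_1 itself \<Rightarrow> bool" where
  "hermite_ring _ \<longleftrightarrow> (\<forall>a b::'a. \<exists>d a' b'. a = d * a' \<and> b = d * b' \<and>
      (\<exists>x y. x * a' + y * b' = 1))"

definition prime_ideal :: "'a::comm_ring_1 set \<Rightarrow> bool" where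
  "prime_ideal P \<longleftrightarrow> is_ideal P \<and> P \<noteq> UNIV \<and> (\<forall>a b. a * b \<in> P \<longrightarrow> a \<in> P \<or> b \<in> P)"

definition Spec :: "'a::comm_ring_1 itself \<Rightarrow> 'a set set" where
  "Spec _ = {P. prime_ideal P}"

definition minimal_prime :: "'a::comm_ring_1 set \<Rightarrow> bool" where
  "minimal_prime P \<longleftrightarrow> prime_ideal P \<and> (\<forall>Q. prime_ideal Q \<and> Q \<subseteq> P \<longrightarrow> Q = P)"

definition MinSpec :: "'a::comm_ring_1 itself \<Rightarrow> 'a set set" where
  "MinSpec _ = {P. minimal_prime P}"

definition basic_open :: "'a::comm_ring_1 \<Rightarrow> 'a set set" where
  "basic_open a = {P. prime_ideal P \<and> a \<notin> P}"

text \<open>Zariski topology on Spec: generated by the basic opens D(a)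
  (open sets = complements of V(S) = unions of D(a)).\<close>
definition zariski :: "'a::comm_ring_1 itself \<Rightarrow> 'a set topology" where
  "zariski _ = topology_generated_by (range (basic_open :: 'a \<Rightarrow> 'a set set))"

definition minspec_topology :: "'a::comm_ring_1 itself \<Rightarrow> 'a set topology" where
  "minspec_topology T = subtopology (zariski T) (MinSpec T)"

end

theory Submission
  imports Defs
begin

text \<open>Write \<open>a = c a0\<close>, \<open>b = c b0\<close> with \<open>c = x a + y b\<close>. Then \<open>e = 1 - x a0 - y b0\<close>
  annihilates \<open>c\<close>, so any perturbation \<open>u = a0 - t e\<close>, \<open>v = b0 + s e\<close> of the cofactors
  still satisfies \<open>u b = v a\<close>, and \<open>a\<close>, \<open>b\<close> are multiples of \<open>p a + q b\<close> with cofactors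
  \<open>u\<close>, \<open>v\<close> as soon as \<open>p u + q v = 1\<close>. That equation only needs to hold up to a nilpotent,
  i.e. modulo every minimal prime, with \<open>p\<close>, \<open>q\<close> chosen uniformly. Modulo the minimal primes
  containing a gcd \<open>c1\<close> of \<open>a0\<close>, \<open>b0\<close>, and modulo the others, suitable \<open>s, t, p, q\<close> are
  easy to find; compactness of the minimal spectrum and the Bezout property yield an element
  \<open>f\<close> that is \<open>1\<close> modulo the former primes and \<open>0\<close> modulo the latter, which glues the two
  choices.\<close>

lemma ideal_zero: "is_ideal I \<Longrightarrow> 0 \<in> I"
  by (simp add: is_ideal_def)

lemma ideal_add: "is_ideal I \<Longrightarrow> x \<in> I \<Longrightarrow> y \<in> I \<Longrightarrow> x + y \<in> I"
  by (simp add: is_ideal_def)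

lemma ideal_mult_left: "is_ideal I \<Longrightarrow> x \<in> I \<Longrightarrow> r * x \<in> I"
  by (simp add: is_ideal_def)

lemma ideal_mult_right: "is_ideal I \<Longrightarrow> x \<in> I \<Longrightarrow> x * r \<in> I"
  by (metis ideal_mult_left mult.commute)

lemma ideal_diff: "is_ideal I \<Longrightarrow> x \<in> I \<Longrightarrow> y \<in> I \<Longrightarrow> x - y \<in> I"
  using ideal_add[of I x "(-1) * y"] ideal_mult_left[of I y "-1"] by simp

lemma prime_ideal_is_ideal: "prime_ideal P \<Longrightarrow> is_ideal P"
  by (simp add: prime_ideal_def)

lemma prime_ideal_one: "prime_ideal P \<Longrightarrow> 1 \<notin> P"
  using ideal_mult_right[of P 1] by (auto simp: prime_ideal_def)

lemma prime_ideal_mult: "prime_ideal P \<Longrightarrow> a * b \<in> P \<Longrightarrow> a \<in> P \<or> b \<in> P"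
  by (simp add: prime_ideal_def)

lemma prime_ideal_power: "prime_ideal P \<Longrightarrow> z ^ n \<in> P \<Longrightarrow> z \<in> P"
  by (induction n) (auto simp: prime_ideal_one dest: prime_ideal_mult)

lemma prime_ideal_nilpotent: "prime_ideal P \<Longrightarrow> z ^ n = 0 \<Longrightarrow> z \<in> P"
  by (metis prime_ideal_power ideal_zero prime_ideal_is_ideal)

lemma minimal_prime_prime: "minimal_prime P \<Longrightarrow> prime_ideal P"
  by (simp add: minimal_prime_def)

section \<open>Prime ideals avoiding a multiplicative set\<close>

lemma is_ideal_Union_chain:
  assumes "C \<noteq> {}" "\<And>I. I \<in> C \<Longrightarrow> is_ideal I" "\<And>I J. I \<in> C \<Longrightarrow> J \<in> C \<Longrightarrow> I \<subseteq> J \<or> J \<subseteq> I"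
  shows "is_ideal (\<Union>C)"
  unfolding is_ideal_def
proof (intro conjI ballI allI)
  show "0 \<in> \<Union>C"
    using assms(1,2) ideal_zero by blast
next
  fix x y assume "x \<in> \<Union>C" "y \<in> \<Union>C"
  then obtain I J where "I \<in> C" "J \<in> C" "x \<in> I" "y \<in> J"
    by blast
  then show "x + y \<in> \<Union>C"
    using assms(2) assms(3)[of I J] ideal_add by blast
next
  fix r x assume "x \<in> \<Union>C"
  then show "r * x \<in> \<Union>C"
    using assms(2) ideal_mult_left by blast
qed

lemma is_ideal_add_multiples:
  assumes "is_ideal M"
  shows "is_ideal {m + r * a | m r. m \<in> M}"
  unfolding is_ideal_def
proof (intro conjI ballI allI)
  show "0 \<in> {m + r * a | m r. m \<in> M}"
    using ideal_zero[OF assms] by (metis (mono_tags, lifting) add_0 mem_Collect_eq mult_zero_left)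
next
  fix u v assume "u \<in> {m + r * a | m r. m \<in> M}" "v \<in> {m + r * a | m r. m \<in> M}"
  then obtain m r m' r' where "u = m + r * a" "v = m' + r' * a" "m \<in> M" "m' \<in> M"
    by blast
  then have "u + v = (m + m') + (r + r') * a" "m + m' \<in> M"
    using ideal_add[OF assms] by (auto simp: algebra_simps)
  then show "u + v \<in> {m + r * a | m r. m \<in> M}"
    by blast
next
  fix s u assume "u \<in> {m + r * a | m r. m \<in> M}"
  then obtain m r where "u = m + r * a" "m \<in> M"
    by blast
  then have "s * u = s * m + (s * r) * a" "s * m \<in> M"
    using ideal_mult_left[OF assms] by (auto simp: algebra_simps)
  then show "s * u \<in> {m + r * a | m r. m \<in> M}"
    by blast
qed

lemma prime_ideal_if_maximal_disjoint:
  assumes M: "is_ideal M" "M \<inter> T = {}"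
    and T: "1 \<in> T" "\<And>x y. x \<in> T \<Longrightarrow> y \<in> T \<Longrightarrow> x * y \<in> T"
    and maximal: "\<And>J. is_ideal J \<Longrightarrow> J \<inter> T = {} \<Longrightarrow> M \<subseteq> J \<Longrightarrow> J = M"
  shows "prime_ideal M"
proof -
  have meets_T: "\<exists>m r. m \<in> M \<and> m + r * a \<in> T" if "a \<notin> M" for a
  proof (rule ccontr)
    assume "\<not> ?thesis"
    then have "{m + r * a | m r. m \<in> M} \<inter> T = {}"
      by blast
    moreover have "M \<subseteq> {m + r * a | m r. m \<in> M}"
      by (metis (mono_tags, lifting) add_0_right mem_Collect_eq mult_zero_left subsetI)
    ultimately have "{m + r * a | m r. m \<in> M} = M"
      using maximal is_ideal_add_multiples[OF M(1)] by blast
    moreover have "a \<in> {m + r * a | m r. m \<in> M}"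
      using ideal_zero[OF M(1)] by (metis (mono_tags, lifting) add_0 mem_Collect_eq mult_1)
    ultimately show False
      using that by blast
  qed
  have "a \<in> M \<or> b \<in> M" if ab: "a * b \<in> M" for a b
  proof (rule ccontr)
    assume "\<not> (a \<in> M \<or> b \<in> M)"
    then obtain m r m' r' where mr: "m \<in> M" "m + r * a \<in> T" "m' \<in> M" "m' + r' * b \<in> T"
      using meets_T by blast
    have "(m + r * a) * (m' + r' * b) = m * (m' + r' * b) + (r * a) * m' + (r * r') * (a * b)"
      by (simp add: algebra_simps)
    also have "\<dots> \<in> M"
      using mr ab by (simp add: ideal_add[OF M(1)] ideal_mult_left[OF M(1)] ideal_mult_right[OF M(1)])
    finally show False
      using T(2)[OF mr(2,4)] M(2) by blast
  qed
  then show ?thesis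
    using M T(1) by (auto simp: prime_ideal_def)
qed

lemma ex_prime_ideal_disjoint:
  fixes T :: "'a::comm_ring_1 set"
  assumes "1 \<in> T" "0 \<notin> T" "\<And>x y. x \<in> T \<Longrightarrow> y \<in> T \<Longrightarrow> x * y \<in> T"
  shows "\<exists>Q. prime_ideal Q \<and> Q \<inter> T = {}"
proof -
  define A where "A = {I. is_ideal I \<and> I \<inter> T = {}}"
  have "\<exists>U\<in>A. \<forall>I\<in>C. I \<subseteq> U" if C: "C \<in> chains A" for C
  proof (cases "C = {}")
    case True
    have "{0} \<in> A"
      using assms(2) by (auto simp: A_def is_ideal_def)
    then show ?thesis
      using True by blast
  next
    case False
    then have "is_ideal (\<Union>C)"
      using C by (intro is_ideal_Union_chain) (auto simp: A_def dest: chainsD chainsD2)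
    then have "\<Union>C \<in> A"
      using chainsD2[OF C] by (auto simp: A_def)
    then show ?thesis
      by blast
  qed
  then obtain M where "M \<in> A" "\<forall>J\<in>A. M \<subseteq> J \<longrightarrow> J = M"
    using Zorn_Lemma2[of A] by blast
  then have "prime_ideal M"
    using assms by (intro prime_ideal_if_maximal_disjoint[of M T]) (auto simp: A_def)
  then show ?thesis
    using \<open>M \<in> A\<close> by (auto simp: A_def)
qed

section \<open>Minimal primes and nilpotent elements\<close>

lemma prime_ideal_Inter_chain:
  assumes "C \<noteq> {}" "\<And>P. P \<in> C \<Longrightarrow> prime_ideal P"
    and "\<And>P Q. P \<in> C \<Longrightarrow> Q \<in> C \<Longrightarrow> P \<subseteq> Q \<or> Q \<subseteq> P"
  shows "prime_ideal (\<Inter>C)"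
  unfolding prime_ideal_def
proof (intro conjI allI impI)
  show "is_ideal (\<Inter>C)"
    using assms(2) by (auto simp: prime_ideal_def is_ideal_def)
  show "\<Inter>C \<noteq> UNIV"
    using assms(1,2) prime_ideal_one by blast
next
  fix a b assume ab: "a * b \<in> \<Inter>C"
  show "a \<in> \<Inter>C \<or> b \<in> \<Inter>C"
  proof (rule ccontr)
    assume "\<not> ?thesis"
    then obtain P Q where "P \<in> C" "Q \<in> C" "a \<notin> P" "b \<notin> Q"
      by blast
    then show False
      using assms(3)[of P Q] ab prime_ideal_mult[OF assms(2)] by blast
  qed
qed

lemma ex_minimal_prime_subset:
  assumes "prime_ideal P"
  shows "\<exists>Q. minimal_prime Q \<and> Q \<subseteq> P"
proof -
  define A where "A = {Q. prime_ideal Q \<and> Q \<subseteq> P}"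
  have po: "partial_order_on A (relation_of (\<lambda>x y. y \<subseteq> x) A)"
    by (auto simp: partial_order_on_def preorder_on_def refl_on_def trans_on_def
        antisym_on_def relation_of_def)
  have "\<exists>L\<in>A. \<forall>Q\<in>C. L \<subseteq> Q" if C: "C \<in> Chains (relation_of (\<lambda>x y. y \<subseteq> x) A)" for C
  proof (cases "C = {}")
    case True
    then show ?thesis
      using assms by (auto simp: A_def)
  next
    case False
    have "C \<subseteq> A" "\<And>P Q. P \<in> C \<Longrightarrow> Q \<in> C \<Longrightarrow> P \<subseteq> Q \<or> Q \<subseteq> P"
      using C by (auto simp: Chains_def relation_of_def)
    then have "\<Inter>C \<in> A"
      using False prime_ideal_Inter_chain[of C] by (auto simp: A_def) blast
    then show ?thesis
      by blast
  qed
  then obtain Q where "Q \<in> A" "\<forall>Q'\<in>A. Q' \<subseteq> Q \<longrightarrow> Q' = Q"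
    using predicate_Zorn[OF po] by blast
  then have "minimal_prime Q"
    unfolding A_def minimal_prime_def by (metis (mono_tags, lifting) mem_Collect_eq order_trans)
  then show ?thesis
    using \<open>Q \<in> A\<close> by (auto simp: A_def)
qed

lemma in_minimal_primes_iff_nilpotent:
  fixes z :: "'a::comm_ring_1"
  shows "(\<forall>P. minimal_prime P \<longrightarrow> z \<in> P) \<longleftrightarrow> (\<exists>n. z ^ n = 0)"
proof
  assume in_min: "\<forall>P. minimal_prime P \<longrightarrow> z \<in> P"
  show "\<exists>n. z ^ n = 0"
  proof (rule ccontr)
    assume "\<not> ?thesis"
    then have "\<exists>Q. prime_ideal Q \<and> Q \<inter> range (\<lambda>n. z ^ n) = {}"
      by (intro ex_prime_ideal_disjoint) (auto simp flip: power_add intro: range_eqI[of _ _ 0])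
    then obtain Q P where "prime_ideal Q" "Q \<inter> range (\<lambda>n. z ^ n) = {}" "minimal_prime P" "P \<subseteq> Q"
      using ex_minimal_prime_subset by blast
    then show False
      using in_min range_eqI[of "z" "\<lambda>n. z ^ n" 1] by auto
  qed
qed (auto intro: prime_ideal_nilpotent minimal_prime_prime)


lemma minimal_prime_nilpotent_multiple:
  assumes P: "minimal_prime P" and "a \<in> P"
  shows "\<exists>s. s \<notin> P \<and> (\<exists>n. (s * a) ^ n = 0)"
proof (rule ccontr)
  assume none: "\<not> ?thesis"
  have P_prime: "prime_ideal P"
    using P by (rule minimal_prime_prime)
  define T where "T = {s * a ^ n | s n. s \<notin> P}"
  have outside_T: "s \<in> T" if "s \<notin> P" for s
  proof -
    have "s = s * a ^ 0"
      by simp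
    then show ?thesis
      unfolding T_def using that by blast
  qed
  txt \<open>A prime avoiding \<open>T\<close> lies in \<open>P\<close>, so equals \<open>P\<close> by minimality, yet \<open>a \<in> T\<close>.\<close>
  have "\<exists>Q. prime_ideal Q \<and> Q \<inter> T = {}"
  proof (rule ex_prime_ideal_disjoint)
    show "1 \<in> T"
      using outside_T prime_ideal_one[OF P_prime] by blast
  next
    show "0 \<notin> T"
    proof
      assume "0 \<in> T"
      then obtain s n where sn: "s * a ^ n = 0" "s \<notin> P"
        unfolding T_def by (auto dest: sym)
      have "(s * a) ^ Suc n = s ^ n * (s * a ^ n) * a"
        by (simp add: power_mult_distrib algebra_simps)
      then show False
        using none sn by (metis mult_zero_left mult_zero_right)
    qed
  next
    fix u v assume "u \<in> T" "v \<in> T"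
    then obtain s n t m where "u = s * a ^ n" "v = t * a ^ m" "s \<notin> P" "t \<notin> P"
      unfolding T_def by blast
    then have "u * v = (s * t) * a ^ (n + m)" "s * t \<notin> P"
      using prime_ideal_mult[OF P_prime] by (auto simp: power_add algebra_simps)
    then show "u * v \<in> T"
      unfolding T_def by blast
  qed
  then obtain Q where Q: "prime_ideal Q" "Q \<inter> T = {}"
    by blast
  have "Q \<subseteq> P"
    using outside_T Q(2) by blast
  then have "Q = P"
    using P Q(1) by (simp add: minimal_prime_def)
  moreover have "a = 1 * a ^ 1"
    by simp
  then have "a \<in> T"
    unfolding T_def using prime_ideal_one[OF P_prime] by blast
  ultimately show False
    using Q(2) \<open>a \<in> P\<close> by blast
qed

lemma unit_one_plus_nilpotent:
  fixes z :: "'a::comm_ring_1"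
  assumes "z ^ n = 0"
  shows "\<exists>w. (1 + z) * w = 1"
proof -
  have "1 - (- z) ^ n = (1 - (- z)) * (\<Sum>i<n. (- z) ^ i)"
    by (rule one_diff_power_eq)
  moreover have "(- z) ^ n = 0"
    using assms by (simp add: power_minus')
  ultimately show ?thesis
    by (metis diff_minus_eq_add diff_zero)
qed

lemma ideal_gen_subset: "S \<subseteq> ideal_gen S"
  by (auto simp: ideal_gen_def)

lemma ideal_gen_least: "is_ideal J \<Longrightarrow> S \<subseteq> J \<Longrightarrow> ideal_gen S \<subseteq> J"
  by (auto simp: ideal_gen_def)

lemma bezout_ring_generator:
  fixes S :: "'a::comm_ring_1 set"
  assumes "bezout_ring TYPE('a)" and "finite S"
  shows "\<exists>g\<in>ideal_gen S. \<forall>s\<in>S. g dvd s"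
proof -
  have "principal_ideal (ideal_gen S)"
    using assms by (auto simp: bezout_ring_def finitely_generated_ideal_def)
  then obtain d where d: "ideal_gen S = {r * d | r. True}"
    by (auto simp: principal_ideal_def)
  have "d \<in> ideal_gen S"
    unfolding d by (metis (mono_tags, lifting) mem_Collect_eq mult_1)
  moreover have "d dvd s" if "s \<in> S" for s
    using ideal_gen_subset[of S] that unfolding d by auto
  ultimately show ?thesis
    by blast
qed

lemma is_ideal_linear_combinations: "is_ideal {x * a + y * b | x y. True}"
  unfolding is_ideal_def
proof (intro conjI ballI allI)
  show "0 \<in> {x * a + y * b | x y. True}"
    by (metis (mono_tags, lifting) add_0 mem_Collect_eq mult_zero_left)
next
  fix u v assume "u \<in> {x * a + y * b | x y. True}" "v \<in> {x * a + y * b | x y. True}"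
  then obtain x y x' y' where "u = x * a + y * b" "v = x' * a + y' * b"
    by blast
  then have "u + v = (x + x') * a + (y + y') * b"
    by (simp add: algebra_simps)
  then show "u + v \<in> {x * a + y * b | x y. True}"
    by blast
next
  fix r u assume "u \<in> {x * a + y * b | x y. True}"
  then obtain x y where "u = x * a + y * b"
    by blast
  then have "r * u = (r * x) * a + (r * y) * b"
    by (simp add: algebra_simps)
  then show "r * u \<in> {x * a + y * b | x y. True}"
    by blast
qed

lemma bezout_ring_pair:
  fixes a b :: "'a::comm_ring_1"
  assumes "bezout_ring TYPE('a)"
  obtains c x y a0 b0 where "a = c * a0" "b = c * b0" "c * (1 - x * a0 - y * b0) = 0"
proof -
  have "a = 1 * a + 0 * b" "b = 0 * a + 1 * b"
    by simp_all
  then have generators: "{a, b} \<subseteq> {x * a + y * b | x y. True}"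
    by blast
  obtain c where c: "c \<in> ideal_gen {a, b}" "c dvd a" "c dvd b"
    using bezout_ring_generator[OF assms, of "{a, b}"] by auto
  then obtain x y where "c = x * a + y * b"
    using ideal_gen_least[OF is_ideal_linear_combinations generators] by blast
  moreover obtain a0 b0 where "a = c * a0" "b = c * b0"
    using c(2,3) by (meson dvdE)
  ultimately have c: "c = x * a + y * b" "a = c * a0" "b = c * b0"
    by blast+
  have "c * (1 - x * a0 - y * b0) = c - (x * (c * a0) + y * (c * b0))"
    by (simp add: algebra_simps)
  also have "\<dots> = 0"
    using c by simp
  finally show ?thesis
    using that c(2,3) by blast
qed

section \<open>Compactness of the minimal spectrum\<close>

lemma topspace_minspec_topology: "topspace (minspec_topology TYPE('a::comm_ring_1)) = MinSpec TYPE('a)"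
proof -
  have "MinSpec TYPE('a) \<subseteq> basic_open 1"
    by (auto simp: MinSpec_def basic_open_def minimal_prime_prime prime_ideal_one)
  then show ?thesis
    by (auto simp: minspec_topology_def zariski_def)
qed

lemma openin_minspec_basic_open:
  "openin (minspec_topology TYPE('a::comm_ring_1)) (basic_open (s::'a) \<inter> MinSpec TYPE('a))"
  unfolding minspec_topology_def zariski_def openin_subtopology
  by (intro exI[of _ "basic_open s"] conjI topology_generated_by_Basis) auto

lemma is_ideal_colon:
  assumes "\<And>Q. Q \<in> F \<Longrightarrow> is_ideal Q"
  shows "is_ideal {s. \<forall>Q\<in>F. s * c \<in> Q}"
  using assms by (auto simp: is_ideal_def distrib_right mult.assoc)

lemma minspec_compact_complement:
  fixes c :: "'a::comm_ring_1"
  assumes B: "bezout_ring TYPE('a)" and K: "compact_space (minspec_topology TYPE('a))"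
  shows "\<exists>g. \<forall>P. minimal_prime P \<longrightarrow> g * c \<in> P \<and> (c \<in> P \<longrightarrow> g \<notin> P)"
proof -
  define S where "S = {s. \<forall>Q\<in>MinSpec TYPE('a). s * c \<in> Q}"
  define D where "D s = basic_open s \<inter> MinSpec TYPE('a)" for s :: 'a
  have "MinSpec TYPE('a) \<subseteq> \<Union>(D ` insert c S)"
  proof
    fix P assume "P \<in> MinSpec TYPE('a)"
    then have P: "minimal_prime P"
      by (simp add: MinSpec_def)
    show "P \<in> \<Union>(D ` insert c S)"
    proof (cases "c \<in> P")
      case True
      then obtain s n where "s \<notin> P" "(s * c) ^ n = 0"
        using minimal_prime_nilpotent_multiple[OF P] by blast
      then have "s \<in> S" "P \<in> D s"
        using P in_minimal_primes_iff_nilpotent[of "s * c"]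
        by (auto simp: S_def D_def MinSpec_def basic_open_def minimal_prime_prime)
      then show ?thesis
        by blast
    next
      case False
      then have "P \<in> D c"
        using P by (simp add: D_def basic_open_def MinSpec_def minimal_prime_prime)
      then show ?thesis
        by blast
    qed
  qed
  txt \<open>Compactness leaves finitely many \<open>s\<close> with \<open>s c\<close> nilpotent; Bezout replaces them by one
    generator \<open>g\<close>.\<close>
  moreover have "\<forall>U\<in>D ` insert c S. openin (minspec_topology TYPE('a)) U"
    unfolding D_def using openin_minspec_basic_open by blast
  ultimately obtain F where "finite F" "F \<subseteq> D ` insert c S" "MinSpec TYPE('a) \<subseteq> \<Union>F"
    using K unfolding compact_space_alt topspace_minspec_topology by meson
  moreover obtain C where "finite C" "C \<subseteq> insert c S" "F = D ` C"
    using finite_subset_image[OF \<open>finite F\<close> \<open>F \<subseteq> D ` insert c S\<close>] by blast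
  ultimately have C: "finite C" "C \<subseteq> insert c S" "MinSpec TYPE('a) \<subseteq> \<Union>(D ` C)"
    by blast+
  then obtain g where g: "g \<in> ideal_gen (C - {c})" "\<And>s. s \<in> C - {c} \<Longrightarrow> g dvd s"
    using bezout_ring_generator[OF B, of "C - {c}"] by blast
  have "is_ideal S"
    unfolding S_def by (rule is_ideal_colon) (simp add: MinSpec_def minimal_prime_prime prime_ideal_is_ideal)
  then have "g \<in> S"
    using ideal_gen_least[of S "C - {c}"] C(2) g(1) by blast
  have "g * c \<in> P \<and> (c \<in> P \<longrightarrow> g \<notin> P)" if P: "minimal_prime P" for P
  proof (intro conjI impI)
    show "g * c \<in> P"
      using \<open>g \<in> S\<close> P by (simp add: S_def MinSpec_def)
  next
    assume "c \<in> P"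
    obtain s where "s \<in> C" "P \<in> D s"
      using C(3) P by (auto simp: MinSpec_def)
    then have "s \<notin> P" "g dvd s"
      using g(2) \<open>c \<in> P\<close> by (auto simp: D_def basic_open_def)
    then show "g \<notin> P"
      using ideal_mult_right[OF prime_ideal_is_ideal[OF minimal_prime_prime[OF P]]] by blast
  qed
  then show ?thesis
    by blast
qed

lemma minspec_separating_element:
  fixes c :: "'a::comm_ring_1"
  assumes "bezout_ring TYPE('a)" and "compact_space (minspec_topology TYPE('a))"
  shows "\<exists>f. \<forall>P. minimal_prime P \<longrightarrow> (if c \<in> P then 1 - f \<in> P else f \<in> P)"
proof -
  obtain g where g: "\<And>P. minimal_prime P \<Longrightarrow> g * c \<in> P \<and> (c \<in> P \<longrightarrow> g \<notin> P)"
    using minspec_compact_complement[OF assms] by blast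
  obtain k m n g1 c1 where k: "g = k * g1" "c = k * c1" "k * (1 - m * g1 - n * c1) = 0"
    by (rule bezout_ring_pair[OF assms(1)])
  have "if c \<in> P then 1 - m * g1 \<in> P else m * g1 \<in> P" if P: "minimal_prime P" for P
  proof -
    have P_prime: "prime_ideal P" and P_ideal: "is_ideal P"
      using P by (simp_all add: minimal_prime_prime prime_ideal_is_ideal)
    have "k \<notin> P"
    proof
      assume "k \<in> P"
      then have "g \<in> P" "c \<in> P"
        unfolding k(1,2) using ideal_mult_right[OF P_ideal] by blast+
      then show False
        using g[OF P] by blast
    qed
    moreover have "k * (1 - m * g1 - n * c1) \<in> P"
      using k(3) ideal_zero[OF P_ideal] by simp
    ultimately have defect: "1 - m * g1 - n * c1 \<in> P"
      using prime_ideal_mult[OF P_prime] by blast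
    show ?thesis
    proof (cases "c \<in> P")
      case True
      then have "c1 \<in> P"
        using prime_ideal_mult[OF P_prime, of k c1] \<open>k \<notin> P\<close> unfolding k(2) by blast
      then have "(1 - m * g1 - n * c1) + n * c1 \<in> P"
        using defect ideal_add[OF P_ideal] ideal_mult_left[OF P_ideal] by blast
      then show ?thesis
        using True by simp
    next
      case False
      then have "g \<in> P"
        using g[OF P] prime_ideal_mult[OF P_prime, of g c] by blast
      then have "g1 \<in> P"
        using prime_ideal_mult[OF P_prime, of k g1] \<open>k \<notin> P\<close> unfolding k(1) by blast
      then show ?thesis
        using False ideal_mult_left[OF P_ideal] by simp
    qed
  qed
  then show ?thesis
    by (intro exI[of _ "m * g1"]) blast
qed

section \<open>Perturbing the cofactors of a gcd\<close>

lemma common_factor_of_comaximal_cofactors: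
  fixes a b u v :: "'a::comm_ring_1"
  assumes "u * b = v * a" and "p * u + q * v = 1"
  shows "a = (p * a + q * b) * u" and "b = (p * a + q * b) * v"
proof -
  have "(p * a + q * b) * u = a * (p * u) + q * (u * b)"
    by (simp add: algebra_simps)
  also have "\<dots> = a * (p * u) + q * (v * a)"
    by (simp add: assms(1))
  also have "\<dots> = a * (p * u + q * v)"
    by (simp add: algebra_simps)
  finally show "a = (p * a + q * b) * u"
    using assms(2) by simp
  have "(p * a + q * b) * v = p * (v * a) + b * (q * v)"
    by (simp add: algebra_simps)
  also have "\<dots> = p * (u * b) + b * (q * v)"
    by (simp add: assms(1))
  also have "\<dots> = b * (p * u + q * v)"
    by (simp add: algebra_simps)
  finally show "b = (p * a + q * b) * v"
    using assms(2) by simp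
qed

lemma comaximal_if_nilpotent_defect:
  fixes u v :: "'a::comm_ring_1"
  assumes "(w * u + z * v - 1) ^ n = 0"
  shows "\<exists>p q. p * u + q * v = 1"
proof -
  obtain t where "(1 + (w * u + z * v - 1)) * t = 1"
    using unit_one_plus_nilpotent[OF assms] by blast
  then have "(w * t) * u + (z * t) * v = 1"
    by (simp add: algebra_simps)
  then show ?thesis
    by blast
qed

lemma comaximal_perturbed_cofactors:
  fixes a0 b0 :: "'a::comm_ring_1"
  assumes cofactors: "a0 = c1 * \<alpha>" "b0 = c1 * \<beta>"
    and annihilator: "c1 * (1 - x1 * \<alpha> - y1 * \<beta>) = 0"
    and separating: "\<And>P. minimal_prime P \<Longrightarrow> (if c1 \<in> P then 1 - f \<in> P else f \<in> P)"
    and e: "e = 1 - x * a0 - y * b0"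
  shows "\<exists>p q. p * (a0 - y1 * e) + q * (b0 + (f + (1 - f) * x1) * e) = 1"
proof -
  define s where "s = x * \<alpha> + y * \<beta>"
  define e1 where "e1 = 1 - x1 * \<alpha> - y1 * \<beta>"
  txt \<open>Modulo a minimal prime containing \<open>c1\<close>, where \<open>f \<equiv> 1\<close>, the witnesses \<open>0, 1\<close>
    work; modulo the others, where \<open>f \<equiv> 0\<close> and \<open>e1 \<equiv> 0\<close>, the witnesses
    \<open>s * x1 - \<beta>, s * y1 + \<alpha>\<close> work.\<close>
  define w where "w = (1 - f) * (s * x1 - \<beta>)"
  define z where "z = f + (1 - f) * (s * y1 + \<alpha>)"
  have defect: "w * (a0 - y1 * e) + z * (b0 + (f + (1 - f) * x1) * e) - 1
      = (f * c1) * (\<beta> - f * s) + (f * (1 - f)) * (e * (x1 + (s * y1 + \<alpha>) * (1 - x1)) - 1)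
        - (1 - f) * e1"
    unfolding w_def z_def s_def e1_def e cofactors by (simp add: algebra_simps)
  have "w * (a0 - y1 * e) + z * (b0 + (f + (1 - f) * x1) * e) - 1 \<in> P" if P: "minimal_prime P" for P
  proof -
    have P_prime: "prime_ideal P" and P_ideal: "is_ideal P"
      using P by (simp_all add: minimal_prime_prime prime_ideal_is_ideal)
    have "f * c1 \<in> P \<and> f * (1 - f) \<in> P \<and> (1 - f) * e1 \<in> P"
    proof (cases "c1 \<in> P")
      case True
      then show ?thesis
        using separating[OF P] ideal_mult_left[OF P_ideal] ideal_mult_right[OF P_ideal] by simp
    next
      case False
      then have "e1 \<in> P"
        using annihilator ideal_zero[OF P_ideal] prime_ideal_mult[OF P_prime] unfolding e1_def by metis
      then show ?thesis
        using False separating[OF P] ideal_mult_left[OF P_ideal] ideal_mult_right[OF P_ideal] by simp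
    qed
    then show ?thesis
      unfolding defect by (meson P_ideal ideal_add ideal_diff ideal_mult_right)
  qed
  then obtain n where "(w * (a0 - y1 * e) + z * (b0 + (f + (1 - f) * x1) * e) - 1) ^ n = 0"
    using in_minimal_primes_iff_nilpotent by blast
  then show ?thesis
    by (rule comaximal_if_nilpotent_defect)
qed

lemma hermite_pair_of_perturbed_cofactors:
  fixes a b :: "'a::comm_ring_1"
  assumes "a = c * a0" "b = c * b0" "c * e = 0" "p * (a0 - t * e) + q * (b0 + s * e) = 1"
  shows "\<exists>d a' b'. a = d * a' \<and> b = d * b' \<and> (\<exists>x y. x * a' + y * b' = 1)"
proof -
  have "(a0 - t * e) * b - (b0 + s * e) * a = - (c * e) * (t * b0 + s * a0)"
    unfolding assms(1,2) by (simp add: algebra_simps)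
  then have "(a0 - t * e) * b = (b0 + s * e) * a"
    using assms(3) by simp
  then show ?thesis
    using common_factor_of_comaximal_cofactors[OF _ assms(4)] assms(4) by blast
qed

theorem theorem3p3:
  assumes "bezout_ring TYPE('a::comm_ring_1)"
    and "compact_space (minspec_topology TYPE('a))"
  shows "hermite_ring TYPE('a)"
  unfolding hermite_ring_def
proof (intro allI)
  fix a b :: 'a
  obtain c x y a0 b0 where ab: "a = c * a0" "b = c * b0" and ann: "c * (1 - x * a0 - y * b0) = 0"
    by (rule bezout_ring_pair[OF assms(1)])
  obtain c1 x1 y1 \<alpha> \<beta> where "a0 = c1 * \<alpha>" "b0 = c1 * \<beta>" "c1 * (1 - x1 * \<alpha> - y1 * \<beta>) = 0"
    by (rule bezout_ring_pair[OF assms(1)])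
  moreover obtain f where "\<And>P. minimal_prime P \<Longrightarrow> (if c1 \<in> P then 1 - f \<in> P else f \<in> P)"
    using minspec_separating_element[OF assms] by blast
  ultimately obtain p q where
    "p * (a0 - y1 * (1 - x * a0 - y * b0)) + q * (b0 + (f + (1 - f) * x1) * (1 - x * a0 - y * b0)) = 1"
    using comaximal_perturbed_cofactors[OF _ _ _ _ refl] by blast
  then show "\<exists>d a' b'. a = d * a' \<and> b = d * b' \<and> (\<exists>x y. x * a' + y * b' = 1)"
    using hermite_pair_of_perturbed_cofactors[OF ab ann] by blast
qed

end
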